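(* Let $z\in\mathbb{C}$ and let $s,a$ be parameters for which $\Phi(z,s,a)$ and $\Gamma(s)$ are defined. If the integral converges, then \[ \Phi(z,s,a)\,\Gamma(s)=\int_0^1\!\!\int_0^1\frac{-s\,(xy)^{a-1}\left(-\log(y)\right)^{s-1}}{(1-zxy)\log(xy)}\,dx\,dy, \] and \[ \zeta(s)\,\Gamma(s)=\int_0^1\!\!\int_0^1\frac{-s\left(-\log(y)\right)^{s-1}}{(1-xy)\log(xy)}\,dx\,dy. \]
   Context: The Lerch transcendent is $\Phi(z,s,a)=\sum_{k=0}^\infty \frac{z^k}{(k+a)^s}$ (where this series converges); $\Gamma$ is Euler's gamma function and $\zeta$ the Riemann zeta function. *)

theory Defs
  imports "HOL-Analysis.Analysis"
begin

definition lerch_phi :: "complex \<Rightarrow> complex \<Rightarrow> complex \<Rightarrow> complex" where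
  "lerch_phi z s a = (\<Sum>k. z ^ k / (of_nat k + a) powr s)"

text \<open>Riemann zeta function via its Dirichlet series (agrees with zeta for Re s > 1,
  which is exactly where the series converges).\<close>
definition riemann_zeta :: "complex \<Rightarrow> complex" where
  "riemann_zeta s = (\<Sum>k. 1 / (of_nat (Suc k)) powr s)"

end

theory Submission
  imports Defs "HOL-Complex_Analysis.Cauchy_Integral_Theorem" "HOL-Real_Asymp.Real_Asymp"
begin

text \<open>Put \<open>u = x y\<close>.  For fixed \<open>u\<close> the integral of \<open>(- ln y) powr (s - 1) / y\<close> over
  \<open>]u, 1[\<close> is \<open>(- ln u) powr s / s\<close>, which cancels the factor \<open>- s / ln u\<close>, so the double
  integral equals \<open>\<integral>\<^sub>0\<^sup>1 u powr (a - 1) (- ln u) powr (s - 1) / (1 - z u) du\<close>.  Convergence of the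
  series forces \<open>|z| \<le> 1\<close>, so \<open>1 / (1 - z u)\<close> may be expanded geometrically and integrated
  termwise; after \<open>u = exp (- t)\<close> the \<open>k\<close>-th term is the Gamma integral
  \<open>\<integral>\<^sub>0\<^sup>\<infinity> t powr (s - 1) exp (- (a + k) t) dt = \<Gamma>(s) (a + k) powr (- s)\<close>.  Integrability of the
  double integral forces \<open>Re s > 0\<close> and \<open>Re a > 0\<close>, since otherwise \<open>1 / t\<close> would be
  integrable at \<open>0\<close> or at \<open>\<infinity>\<close>.  The zeta identity is the case \<open>z = a = 1\<close>.\<close>

section \<open>Lebesgue integrals on the real line\<close>

lemma set_integrable_lborel_iff_absolutely_integrable:
  fixes f :: "real \<Rightarrow> 'b::euclidean_space"
  assumes "S \<in> sets borel" and "f \<in> borel_measurable borel"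
  shows "set_integrable lborel S f \<longleftrightarrow> f absolutely_integrable_on S"
proof -
  have "(\<lambda>x. indicator S x *\<^sub>R f x) \<in> borel_measurable lborel"
    using assms by measurable
  from integrable_completion[OF this] show ?thesis
    unfolding set_integrable_def by simp
qed

lemma set_lborel_integral_eq_integral:
  fixes f :: "real \<Rightarrow> 'b::euclidean_space"
  assumes "S \<in> sets borel" and "f \<in> borel_measurable borel"
    and "set_integrable lborel S f"
  shows "(LINT x:S|lborel. f x) = integral S f"
proof -
  have m: "(\<lambda>x. indicator S x *\<^sub>R f x) \<in> borel_measurable lborel"
    using assms by measurable
  have "(LINT x:S|lborel. f x) = (LINT x:S|lebesgue. f x)"
    unfolding set_lebesgue_integral_def using integral_completion[OF m] by simp
  also have "\<dots> = integral S f"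
    using assms by (intro set_lebesgue_integral_eq_integral)
      (simp_all add: set_integrable_lborel_iff_absolutely_integrable)
  finally show ?thesis .
qed

lemma set_integrable_lborel_change_variables:
  fixes f :: "real \<Rightarrow> 'b::euclidean_space" and g h :: "real \<Rightarrow> real"
  assumes S: "S \<in> sets borel" and gS: "g ` S \<in> sets borel"
    and f: "f \<in> borel_measurable borel"
    and fg: "(\<lambda>x. \<bar>h x\<bar> *\<^sub>R f (g x)) \<in> borel_measurable borel"
    and deriv: "\<And>x. x \<in> S \<Longrightarrow> (g has_field_derivative h x) (at x within S)"
    and inj: "inj_on g S"
  shows "set_integrable lborel S (\<lambda>x. \<bar>h x\<bar> *\<^sub>R f (g x)) \<longleftrightarrow> set_integrable lborel (g ` S) f"
    and "set_integrable lborel (g ` S) f \<Longrightarrow>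
         (LINT x:g ` S|lborel. f x) = (LINT x:S|lborel. \<bar>h x\<bar> *\<^sub>R f (g x))"
proof -
  note cv = has_absolute_integral_change_of_variables_real[OF _ deriv inj]
  note iff = set_integrable_lborel_iff_absolutely_integrable[OF S fg]
    set_integrable_lborel_iff_absolutely_integrable[OF gS f]
  show *: "set_integrable lborel S (\<lambda>x. \<bar>h x\<bar> *\<^sub>R f (g x)) \<longleftrightarrow> set_integrable lborel (g ` S) f"
    using cv[of f "integral (g ` S) f"] cv[of f "integral S (\<lambda>x. \<bar>h x\<bar> *\<^sub>R f (g x))"] S
    unfolding iff by auto
  assume i: "set_integrable lborel (g ` S) f"
  have "integral S (\<lambda>x. \<bar>h x\<bar> *\<^sub>R f (g x)) = integral (g ` S) f"
    using cv[of f "integral (g ` S) f"] i S unfolding iff by auto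
  then show "(LINT x:g ` S|lborel. f x) = (LINT x:S|lborel. \<bar>h x\<bar> *\<^sub>R f (g x))"
    using i * by (simp add: set_lborel_integral_eq_integral[OF S fg] set_lborel_integral_eq_integral[OF gS f])
qed

lemma image_exp_minus_Ioi: "(\<lambda>t. exp (- t)) ` {a<..} = {0<..<exp (- a::real)}"
proof
  show "{0<..<exp (- a)} \<subseteq> (\<lambda>t::real. exp (- t)) ` {a<..}"
  proof
    fix y :: real assume y: "y \<in> {0<..<exp (- a)}"
    then have "ln y < - a" using ln_less_cancel_iff[of y "exp (- a)"] by simp
    then show "y \<in> (\<lambda>t. exp (- t)) ` {a<..}" using y by (intro image_eqI[of _ _ "- ln y"]) auto
  qed
qed auto

lemma image_exp_minus_Ioo:
  "(\<lambda>t. exp (- t)) ` {a<..<b} = {exp (- b)<..<exp (- a::real)}"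
proof
  show "{exp (- b)<..<exp (- a)} \<subseteq> (\<lambda>t::real. exp (- t)) ` {a<..<b}"
  proof
    fix y :: real assume y: "y \<in> {exp (- b)<..<exp (- a)}"
    then have "y > 0" by (meson exp_gt_zero greaterThanLessThan_iff order.strict_trans)
    with y have "- b < ln y" "ln y < - a"
      using ln_less_cancel_iff[of y "exp (- a)"] ln_less_cancel_iff[of "exp (- b)" y] by auto
    then show "y \<in> (\<lambda>t. exp (- t)) ` {a<..<b}" using \<open>y > 0\<close> by (intro image_eqI[of _ _ "- ln y"]) auto
  qed
qed auto

lemma image_exp_Ioi: "exp ` {a<..} = {exp (a::real)<..}"
proof
  show "{exp a<..} \<subseteq> exp ` {a<..}"
  proof
    fix y :: real assume "y \<in> {exp a<..}"
    then have "y > 0" "a < ln y"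
      using ln_less_cancel_iff[of "exp a" y] by (auto intro: less_trans[OF exp_gt_zero])
    then show "y \<in> exp ` {a<..}" by (intro image_eqI[of _ _ "ln y"]) auto
  qed
qed auto

lemma image_mult_Ioi:
  assumes "c > 0"
  shows "(\<lambda>x. c * x) ` {0<..} = {0::real<..}"
proof
  show "{0<..} \<subseteq> (\<lambda>x. c * x) ` {0<..}"
  proof
    fix y :: real assume "y \<in> {0<..}"
    with assms show "y \<in> (\<lambda>x. c * x) ` {0<..}" by (intro image_eqI[of _ _ "y / c"]) auto
  qed
qed (use assms in auto)

lemma has_field_derivative_exp_minus:
  "((\<lambda>t. exp (- t)) has_field_derivative - exp (- x)) (at x within S)"
  by (auto intro!: derivative_eq_intros)

lemma inj_on_exp_minus: "inj_on (\<lambda>t::real. exp (- t)) S"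
  by (auto intro!: inj_onI)

lemma not_set_integrable_one_Ioi: "\<not> set_integrable lborel {(a::real)<..} (\<lambda>_. 1::real)"
proof
  assume "set_integrable lborel {a<..} (\<lambda>_. 1::real)"
  then obtain r where r: "emeasure lborel {a<..} = ennreal r"
    unfolding set_integrable_def by (auto simp: integrable_indicator_iff less_top_ennreal)
  have "emeasure lborel {a<..<a + \<bar>r\<bar> + 1} \<le> emeasure lborel {a<..}"
    by (intro emeasure_mono) auto
  then have "ennreal (\<bar>r\<bar> + 1) \<le> ennreal r"
    using r by simp
  then show False
    by (cases "r \<ge> 0") (auto simp: ennreal_le_iff ennreal_neg)
qed

lemma not_set_integrable_inverse_at_0:
  assumes "c > 0"
  shows "\<not> set_integrable lborel {0<..<c} (\<lambda>t::real. 1 / t)"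
proof
  assume "set_integrable lborel {0<..<c} (\<lambda>t::real. 1 / t)"
  moreover have "(\<lambda>t. exp (- t)) ` {- ln c<..} = {0<..<c}"
    using assms by (simp add: image_exp_minus_Ioi)
  ultimately have "set_integrable lborel {- ln c<..} (\<lambda>x. \<bar>- exp (- x)\<bar> *\<^sub>R (1 / exp (- x)))"
    using set_integrable_lborel_change_variables(1)[of "{- ln c<..}" "\<lambda>t. exp (- t)" "\<lambda>t::real. 1 / t",
        OF _ _ _ _ has_field_derivative_exp_minus inj_on_exp_minus]
    by (simp add: image_exp_minus_Ioi)
  then have "set_integrable lborel {- ln c<..} (\<lambda>_. 1::real)"
    by (rule set_integrable_cong[THEN iffD1, rotated -1]) auto
  then show False using not_set_integrable_one_Ioi by blast
qed

lemma not_set_integrable_inverse_at_top: "\<not> set_integrable lborel {1<..} (\<lambda>t::real. 1 / t)"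
proof
  assume "set_integrable lborel {1<..} (\<lambda>t::real. 1 / t)"
  moreover have "(exp has_field_derivative exp x) (at x within {0<..})" for x :: real
    by (auto intro!: derivative_eq_intros)
  ultimately have "set_integrable lborel {0<..} (\<lambda>x. \<bar>exp x\<bar> *\<^sub>R (1 / exp x))"
    using set_integrable_lborel_change_variables(1)[of "{0<..}" exp "\<lambda>t::real. 1 / t" exp]
    by (simp add: image_exp_Ioi inj_on_def)
  then have "set_integrable lborel {(0::real)<..} (\<lambda>_. 1::real)"
    by (rule set_integrable_cong[THEN iffD1, rotated -1]) auto
  then show False using not_set_integrable_one_Ioi by blast
qed

section \<open>Integrals of powers of \<open>t\<close> and of \<open>- ln y\<close>\<close>

lemma powr_integral_Ioo:
  assumes s: "Re s > 0" and c: "c > 0"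
  shows "set_integrable lborel {0<..<c} (\<lambda>t. of_real t powr (s - 1) :: complex)"
    and "(LINT t:{0<..<c}|lborel. of_real t powr (s - 1) :: complex) = of_real c powr s / s"
proof -
  have "((\<lambda>t. complex_of_real t powr (s - 1)) has_integral
            (of_real c powr s / s - of_real 0 powr s / s)) {0..c}" using s c
    by (intro fundamental_theorem_of_calculus_interior)
       (auto intro!: continuous_intros derivative_eq_intros has_vector_derivative_real_field)
  then have int: "((\<lambda>t. complex_of_real t powr (s - 1)) has_integral (of_real c powr s / s)) {0<..<c}"
    using has_integral_open_interval[of "\<lambda>t. complex_of_real t powr (s - 1)" _ 0 c] by simp
  have "((\<lambda>t. t powr (Re s - 1)) has_integral (c powr (Re s - 1 + 1) / (Re s - 1 + 1))) {0..c}"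
    using has_integral_powr_from_0[of "Re s - 1" c] s c by simp
  then have norm_int: "(\<lambda>t. t powr (Re s - 1)) integrable_on {0<..<c}"
    using has_integral_open_interval[of "\<lambda>t. t powr (Re s - 1)" _ 0 c] by (auto simp: integrable_on_def)
  have "(\<lambda>t. complex_of_real t powr (s - 1)) absolutely_integrable_on {0<..<c}"
    using int by (intro absolutely_integrable_integrable_bound[OF _ _ norm_int])
      (auto simp: norm_powr_real_powr integrable_on_def)
  moreover have m: "(\<lambda>t. complex_of_real t powr (s - 1)) \<in> borel_measurable borel"
    by measurable
  ultimately show si: "set_integrable lborel {0<..<c} (\<lambda>t. of_real t powr (s - 1) :: complex)"
    by (simp add: set_integrable_lborel_iff_absolutely_integrable)
  show "(LINT t:{0<..<c}|lborel. of_real t powr (s - 1) :: complex) = of_real c powr s / s"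
    using int set_lborel_integral_eq_integral[OF _ m si] by (simp add: integral_unique)
qed

lemma Re_pos_if_set_integrable_powr:
  assumes c: "c > 0"
    and int: "set_integrable lborel {0<..<c} (\<lambda>t. of_real t powr (s - 1) :: complex)"
  shows "Re s > 0"
proof (rule ccontr)
  assume "\<not> Re s > 0"
  define c' where "c' = min c 1"
  have c': "c' > 0" "c' \<le> 1" "c' \<le> c" using c by (auto simp: c'_def)
  have "set_integrable lborel {0<..<c'} (\<lambda>t. of_real t powr (s - 1) :: complex)"
    using c' by (intro set_integrable_subset[OF int]) auto
  then have "set_integrable lborel {0<..<c'} (\<lambda>t::real. 1 / t)"
  proof (rule set_integrable_bound)
    show "set_borel_measurable lborel {0<..<c'} (\<lambda>t::real. 1 / t)"
      unfolding set_borel_measurable_def by measurable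
    show "AE t in lborel. t \<in> {0<..<c'} \<longrightarrow> norm (1 / t) \<le> norm (of_real t powr (s - 1) :: complex)"
    proof (intro AE_I2 impI)
      fix t :: real assume t: "t \<in> {0<..<c'}"
      then have "t powr (-1) \<le> t powr (Re s - 1)"
        using c' \<open>\<not> Re s > 0\<close> by (intro powr_mono') auto
      with t show "norm (1 / t) \<le> norm (of_real t powr (s - 1) :: complex)"
        by (simp add: norm_powr_real_powr powr_minus divide_inverse)
    qed
  qed
  then show False using not_set_integrable_inverse_at_0[OF c'(1)] by blast
qed

text \<open>Substitute \<open>y = exp (- t)\<close>.\<close>

lemma log_powr_over_id_substitution:
  assumes u: "0 < u" "u < 1"
  shows "set_integrable lborel {u<..<1} (\<lambda>y. of_real (- ln y) powr (s - 1) / of_real y) \<longleftrightarrow>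
           set_integrable lborel {0<..<- ln u} (\<lambda>t. of_real t powr (s - 1) :: complex)"
    and "set_integrable lborel {u<..<1} (\<lambda>y. of_real (- ln y) powr (s - 1) / of_real y) \<Longrightarrow>
         (LINT y:{u<..<1}|lborel. of_real (- ln y) powr (s - 1) / of_real y) =
           (LINT t:{0<..<- ln u}|lborel. of_real t powr (s - 1) :: complex)"
proof -
  define f where "f = (\<lambda>y::real. of_real (- ln y) powr (s - 1) / (of_real y :: complex))"
  have img: "(\<lambda>t. exp (- t)) ` {0<..<- ln u} = {u<..<1}"
    using u by (simp add: image_exp_minus_Ioo)
  have pt: "(\<lambda>t. \<bar>- exp (- t)\<bar> *\<^sub>R f (exp (- t))) = (\<lambda>t. of_real t powr (s - 1))"
    by (simp add: f_def scaleR_conv_of_real)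
  have "f \<in> borel_measurable borel" "(\<lambda>t. of_real t powr (s - 1) :: complex) \<in> borel_measurable borel"
    unfolding f_def by measurable
  note cov = set_integrable_lborel_change_variables[of "{0<..<- ln u}" "\<lambda>t. exp (- t)" f,
      OF _ _ _ _ has_field_derivative_exp_minus inj_on_exp_minus, unfolded img pt, OF _ _ this]
  show "set_integrable lborel {u<..<1} (\<lambda>y. of_real (- ln y) powr (s - 1) / of_real y) \<longleftrightarrow>
           set_integrable lborel {0<..<- ln u} (\<lambda>t. of_real t powr (s - 1) :: complex)"
    using cov(1) unfolding pt f_def by simp
  assume "set_integrable lborel {u<..<1} (\<lambda>y. of_real (- ln y) powr (s - 1) / of_real y)"
  then show "(LINT y:{u<..<1}|lborel. of_real (- ln y) powr (s - 1) / of_real y) =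
           (LINT t:{0<..<- ln u}|lborel. of_real t powr (s - 1) :: complex)"
    using cov(2) unfolding pt f_def by simp
qed

lemma log_powr_over_id_integral:
  assumes s: "Re s > 0" and u: "0 < u" "u < 1"
  shows "set_integrable lborel {u<..<1} (\<lambda>y. of_real (- ln y) powr (s - 1) / of_real y)"
    and "(LINT y:{u<..<1}|lborel. of_real (- ln y) powr (s - 1) / of_real y) = of_real (- ln u) powr s / s"
proof -
  have c: "- ln u > 0" using u by (simp add: ln_less_zero)
  show i: "set_integrable lborel {u<..<1} (\<lambda>y. of_real (- ln y) powr (s - 1) / of_real y)"
    using log_powr_over_id_substitution(1)[OF u] powr_integral_Ioo(1)[OF s c] by simp
  show "(LINT y:{u<..<1}|lborel. of_real (- ln y) powr (s - 1) / of_real y) = of_real (- ln u) powr s / s"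
    using log_powr_over_id_substitution(2)[OF u i] powr_integral_Ioo(2)[OF s c] by simp
qed

lemma Re_pos_if_set_integrable_log_powr_over_id:
  assumes u: "0 < u" "u < 1"
    and "set_integrable lborel {u<..<1} (\<lambda>y. of_real (- ln y) powr (s - 1) / (of_real y :: complex))"
  shows "Re s > 0"
  using assms log_powr_over_id_substitution(1)[OF u]
  by (intro Re_pos_if_set_integrable_powr[of "- ln u"]) (simp_all add: ln_less_zero)

section \<open>Gamma integrals with complex rate\<close>

definition gamma_kernel :: "complex \<Rightarrow> complex \<Rightarrow> real \<Rightarrow> complex" where
  "gamma_kernel s b t = of_real t powr (s - 1) * exp (- b * of_real t)"

lemma gamma_kernel_measurable [measurable]: "gamma_kernel s b \<in> borel_measurable borel"
  unfolding gamma_kernel_def by measurable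

lemma gamma_kernel_integral_one:
  assumes "Re s > 0"
  shows "set_integrable lborel {0<..} (gamma_kernel s 1)"
    and "(LINT t:{0<..}|lborel. gamma_kernel s 1 t) = Gamma s"
proof -
  have eq: "gamma_kernel s 1 = (\<lambda>t. of_real t powr (s - 1) / of_real (exp t))"
    by (simp add: fun_eq_iff gamma_kernel_def exp_of_real[symmetric] exp_minus field_simps)
  show i: "set_integrable lborel {0<..} (gamma_kernel s 1)"
    using absolutely_integrable_Gamma_integral'[OF assms]
    by (simp add: set_integrable_lborel_iff_absolutely_integrable eq)
  have "(LINT t:{0<..}|lborel. gamma_kernel s 1 t) = integral {0<..} (gamma_kernel s 1)"
    by (rule set_lborel_integral_eq_integral[OF _ _ i]) auto
  also have "\<dots> = Gamma s"
    using Gamma_integral_complex'[OF assms] unfolding eq by (rule integral_unique)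
  finally show "(LINT t:{0<..}|lborel. gamma_kernel s 1 t) = Gamma s" .
qed

lemma norm_exp_partial_sum_le:
  fixes x :: complex
  shows "norm (\<Sum>n<N. x ^ n / of_nat (fact n)) \<le> exp (norm x)"
proof -
  have "norm (\<Sum>n<N. x ^ n / of_nat (fact n)) \<le> (\<Sum>n<N. norm x ^ n / fact n)"
    by (rule order_trans[OF norm_sum]) (simp add: norm_divide norm_power)
  also have "\<dots> \<le> (\<Sum>n. norm x ^ n / fact n)"
    using exp_converges[of "norm x"]
    by (intro sum_le_suminf) (auto simp: sums_iff divide_inverse mult.commute)
  also have "\<dots> = exp (norm x)"
    using exp_converges[of "norm x"] by (simp add: sums_iff divide_inverse mult.commute)
  finally show ?thesis .
qed

lemma Gamma_shifted_sums:
  fixes s w :: complex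
  assumes s: "s \<notin> \<int>\<^sub>\<le>\<^sub>0" and w: "norm w < 1"
  shows "(\<lambda>n. (- w) ^ n / of_nat (fact n) * Gamma (s + of_nat n)) sums (Gamma s * (1 + w) powr (- s))"
proof -
  have "Gamma s * ((-1)^n * ((s + of_nat n - 1) gchoose n) * w^n) =
          (- w) ^ n / of_nat (fact n) * Gamma (s + of_nat n)" for n
  proof -
    have "(s + of_nat n - 1) gchoose n = pochhammer s n / fact n"
      by (simp add: gbinomial_pochhammer')
    moreover have "pochhammer s n = Gamma (s + of_nat n) / Gamma s"
      using pochhammer_Gamma[OF s] .
    moreover have "Gamma s \<noteq> 0"
      using s by (simp add: Gamma_eq_zero_iff)
    ultimately show ?thesis
      by (simp add: power_minus' field_simps power_mult_distrib)
  qed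
  then show ?thesis
    using sums_mult[OF one_plus_neg_powr_powser[OF w, of s], of "Gamma s"] by simp
qed

lemma integral_gamma_kernel_times_exp_partial_sum:
  assumes s: "Re s > 0"
  shows "(LINT t:{0<..}|lborel. gamma_kernel s 1 t * (\<Sum>n<N. (- w * of_real t) ^ n / of_nat (fact n))) =
           (\<Sum>n<N. (- w) ^ n / of_nat (fact n) * Gamma (s + of_nat n))"
proof -
  have summand: "gamma_kernel s 1 t * ((- w * of_real t) ^ n / of_nat (fact n)) =
                (- w) ^ n / of_nat (fact n) * gamma_kernel (s + of_nat n) 1 t" if "t > 0" for t n
  proof -
    have "of_real t powr (s + of_nat n - 1) = of_real t powr (s - 1) * of_real t powr (of_nat n)"
      by (simp add: powr_add[symmetric] algebra_simps)
    also have "of_real t powr (of_nat n :: complex) = of_real t ^ n"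
      using that by (simp add: powr_nat')
    finally show ?thesis
      unfolding gamma_kernel_def power_mult_distrib by (simp add: field_simps)
  qed
  have "(LINT t:{0<..}|lborel. gamma_kernel s 1 t * (\<Sum>n<N. (- w * of_real t) ^ n / of_nat (fact n))) =
        (LINT t:{0<..}|lborel. (\<Sum>n<N. (- w) ^ n / of_nat (fact n) * gamma_kernel (s + of_nat n) 1 t))"
  proof (intro set_lebesgue_integral_cong allI impI)
    fix t :: real assume "t \<in> {0<..}"
    then show "gamma_kernel s 1 t * (\<Sum>n<N. (- w * of_real t) ^ n / of_nat (fact n)) =
               (\<Sum>n<N. (- w) ^ n / of_nat (fact n) * gamma_kernel (s + of_nat n) 1 t)"
      unfolding sum_distrib_left by (intro sum.cong refl summand) simp
  qed simp
  also have "\<dots> = (\<Sum>n<N. (- w) ^ n / of_nat (fact n) * (LINT t:{0<..}|lborel. gamma_kernel (s + of_nat n) 1 t))"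
  proof -
    let ?g = "\<lambda>n t. indicator {0<..} t *\<^sub>R gamma_kernel (s + of_nat n) 1 t"
    have int: "integrable lborel (\<lambda>t. (- w) ^ n / of_nat (fact n) * ?g n t)" for n
      using gamma_kernel_integral_one(1)[of "s + of_nat n"] s
      by (intro integrable_mult_right) (simp add: set_integrable_def)
    have "integral\<^sup>L lborel (\<lambda>t. \<Sum>n<N. (- w) ^ n / of_nat (fact n) * ?g n t) =
                 (\<Sum>n<N. integral\<^sup>L lborel (\<lambda>t. (- w) ^ n / of_nat (fact n) * ?g n t))"
      by (rule Bochner_Integration.integral_sum[where f="\<lambda>n t. (- w) ^ n / of_nat (fact n) * ?g n t"]) (rule int)
    also have "\<dots> = (\<Sum>n<N. (- w) ^ n / of_nat (fact n) * integral\<^sup>L lborel (?g n))"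
      by (intro sum.cong refl integral_mult_right_zero)
    finally show ?thesis
      by (simp add: set_lebesgue_integral_def scaleR_sum_right mult.left_commute)
  qed
  also have "\<dots> = (\<Sum>n<N. (- w) ^ n / of_nat (fact n) * Gamma (s + of_nat n))"
    using gamma_kernel_integral_one(2)[of "s + of_nat _"] s by simp
  finally show ?thesis .
qed

lemma norm_gamma_kernel_times_exp_partial_sum_le:
  assumes w: "norm w < 1" and t: "t > 0"
  shows "norm (gamma_kernel s 1 t * (\<Sum>n<N. (- w * of_real t) ^ n / of_nat (fact n))) \<le>
           norm (of_real t powr (s - 1) / of_real (exp ((1 - norm w) * t)))"
proof -
  have "norm (gamma_kernel s 1 t * (\<Sum>n<N. (- w * of_real t) ^ n / of_nat (fact n))) \<le>
          norm (gamma_kernel s 1 t) * exp (norm w * t)"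
    using norm_exp_partial_sum_le[of "- w * of_real t" N] t
    by (auto simp: norm_mult intro!: mult_left_mono)
  also have "\<dots> = norm (of_real t powr (s - 1) / of_real (exp ((1 - norm w) * t)))"
    using t by (simp add: gamma_kernel_def norm_mult norm_divide norm_powr_real_powr
         norm_exp_eq_Re exp_diff field_simps exp_add[symmetric])
  finally show ?thesis .
qed

text \<open>Expand \<open>exp (- w t)\<close> into its power series and integrate termwise; the partial sums are
  dominated by \<open>t powr (Re s - 1) * exp ((norm w - 1) t)\<close>.\<close>

lemma gamma_kernel_integral_disc:
  assumes s: "Re s > 0" and w: "norm w < 1"
  shows "set_integrable lborel {0<..} (gamma_kernel s (1 + w))"
    and "(LINT t:{0<..}|lborel. gamma_kernel s (1 + w) t) = Gamma s * (1 + w) powr (- s)"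
proof -
  define S where "S = (\<lambda>N t. indicator {0<..} t *\<^sub>R
                     (gamma_kernel s 1 t * (\<Sum>n<N. (- w * of_real t) ^ n / of_nat (fact n))))"
  define f where "f = (\<lambda>t. indicator {0<..} t *\<^sub>R gamma_kernel s (1 + w) t)"
  define W where "W = (\<lambda>t. indicator {0<..} t *\<^sub>R
                     norm (of_real t powr (s - 1) / of_real (exp ((1 - norm w) * t))))"
  have "(\<lambda>t. of_real t powr (s - 1) / of_real (exp ((1 - norm w) * t))) absolutely_integrable_on {0<..}"
    using absolutely_integrable_Gamma_integral[OF s, of "1 - norm w"] w by simp
  then have "set_integrable lborel {0<..} (\<lambda>t. of_real t powr (s - 1) / of_real (exp ((1 - norm w) * t)))"
    by (simp add: set_integrable_lborel_iff_absolutely_integrable)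
  from set_integrable_norm[OF this] have W: "integrable lborel W"
    unfolding W_def set_integrable_def .
  have lim: "AE t in lborel. (\<lambda>N. S N t) \<longlonglongrightarrow> f t"
  proof (rule AE_I2)
    fix t :: real
    have "(\<lambda>N. \<Sum>n<N. (- w * of_real t) ^ n / of_nat (fact n)) \<longlonglongrightarrow> exp (- w * of_real t)"
      using exp_converges[of "- w * of_real t"]
      by (simp add: sums_def divide_inverse scaleR_conv_of_real mult.commute)
    moreover have "gamma_kernel s 1 t * exp (- w * of_real t) = gamma_kernel s (1 + w) t"
      by (simp add: gamma_kernel_def exp_add[symmetric] algebra_simps)
    ultimately have "(\<lambda>N. gamma_kernel s 1 t * (\<Sum>n<N. (- w * of_real t) ^ n / of_nat (fact n)))
            \<longlonglongrightarrow> gamma_kernel s (1 + w) t"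
      by (metis tendsto_mult_left)
    then show "(\<lambda>N. S N t) \<longlonglongrightarrow> f t"
      unfolding S_def f_def by (rule tendsto_scaleR[OF tendsto_const])
  qed
  have bound: "AE t in lborel. norm (S N t) \<le> W t" for N
    using norm_gamma_kernel_times_exp_partial_sum_le[OF w]
    by (intro AE_I2) (simp add: S_def W_def indicator_def)
  have [measurable]: "S N \<in> borel_measurable lborel" for N
    unfolding S_def by measurable
  have [measurable]: "f \<in> borel_measurable lborel"
    unfolding f_def by measurable
  have "integrable lborel f"
    by (rule integrable_dominated_convergence[OF _ _ W lim bound]) measurable
  then show "set_integrable lborel {0<..} (gamma_kernel s (1 + w))"
    by (simp add: f_def set_integrable_def)
  have conv: "(\<lambda>N. integral\<^sup>L lborel (S N)) \<longlonglongrightarrow> integral\<^sup>L lborel f"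
    by (rule integral_dominated_convergence[OF _ _ W lim bound]) measurable
  moreover have "s \<notin> \<int>\<^sub>\<le>\<^sub>0"
    using s by (auto elim!: nonpos_Ints_cases)
  then have "(\<lambda>N. integral\<^sup>L lborel (S N)) \<longlonglongrightarrow> Gamma s * (1 + w) powr (- s)"
    using Gamma_shifted_sums[OF _ w, of s] integral_gamma_kernel_times_exp_partial_sum[OF s]
    unfolding S_def sums_def set_lebesgue_integral_def by simp
  ultimately show "(LINT t:{0<..}|lborel. gamma_kernel s (1 + w) t) = Gamma s * (1 + w) powr (- s)"
    by (simp add: f_def set_lebesgue_integral_def LIMSEQ_unique)
qed

lemma norm_scaled_minus_one_less_one:
  fixes b :: complex
  assumes "Re b > 0"
  shows "norm (of_real (Re b / (norm b)\<^sup>2) * b - 1) < 1"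
proof -
  have b: "b \<noteq> 0" using assms by auto
  have nb: "(norm b)\<^sup>2 = (Re b)\<^sup>2 + (Im b)\<^sup>2" "(Re b)\<^sup>2 + (Im b)\<^sup>2 \<noteq> 0"
    using b by (simp_all add: cmod_power2 complex_eq_iff)
  have "of_real (Re b / (norm b)\<^sup>2) * b - 1 = \<i> * of_real (Im b) * b / of_real ((norm b)\<^sup>2)"
    unfolding nb(1) using nb(2) by (simp add: complex_eq_iff field_simps power2_eq_square)
  then have "norm (of_real (Re b / (norm b)\<^sup>2) * b - 1) = \<bar>Im b\<bar> / norm b"
    using b by (simp add: norm_mult norm_divide power2_eq_square)
  also have "\<dots> < 1"
  proof -
    have "\<bar>Im b\<bar>\<^sup>2 < (norm b)\<^sup>2"
      using assms unfolding nb(1) by simp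
    then have "\<bar>Im b\<bar> < norm b"
      by (rule power_less_imp_less_base) simp
    then show ?thesis
      using b by simp
  qed
  finally show ?thesis .
qed

lemma gamma_kernel_rescale:
  assumes \<mu>: "\<mu> > 0" and int: "set_integrable lborel {0<..} (gamma_kernel s (of_real \<mu> * b))"
  shows "set_integrable lborel {0<..} (gamma_kernel s b)"
    and "(LINT t:{0<..}|lborel. gamma_kernel s b t) =
           of_real \<mu> powr s * (LINT t:{0<..}|lborel. gamma_kernel s (of_real \<mu> * b) t)"
proof -
  note img = image_mult_Ioi[OF \<mu>]
  have "(\<lambda>x. \<bar>\<mu>\<bar> *\<^sub>R gamma_kernel s b (\<mu> * x)) \<in> borel_measurable borel"
    by measurable
  moreover have "((\<lambda>x. \<mu> * x) has_field_derivative \<mu>) (at x within {0<..})" for x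
    by (auto intro!: derivative_eq_intros)
  moreover have "inj_on (\<lambda>x. \<mu> * x) {0<..}"
    using \<mu> by (auto intro!: inj_onI)
  ultimately have cov:
      "set_integrable lborel {0<..} (\<lambda>x. \<bar>\<mu>\<bar> *\<^sub>R gamma_kernel s b (\<mu> * x)) \<longleftrightarrow>
         set_integrable lborel {0<..} (gamma_kernel s b)"
      "set_integrable lborel {0<..} (gamma_kernel s b) \<Longrightarrow>
         (LINT t:{0<..}|lborel. gamma_kernel s b t) =
           (LINT x:{0<..}|lborel. \<bar>\<mu>\<bar> *\<^sub>R gamma_kernel s b (\<mu> * x))"
    using set_integrable_lborel_change_variables[of "{0<..}" "\<lambda>x. \<mu> * x" "gamma_kernel s b" "\<lambda>_. \<mu>"]
    unfolding img by simp_all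
  have scaled: "\<bar>\<mu>\<bar> *\<^sub>R gamma_kernel s b (\<mu> * x) = of_real \<mu> powr s * gamma_kernel s (of_real \<mu> * b) x"
    if "x \<in> {0<..}" for x
  proof -
    have "of_real (\<mu> * x) powr (s - 1) = of_real \<mu> powr (s - 1) * of_real x powr (s - 1)"
      using that \<mu> by (simp add: powr_times_real)
    moreover have "of_real \<mu> * of_real \<mu> powr (s - 1) = (of_real \<mu> powr s :: complex)"
      using powr_add[of "of_real \<mu> :: complex" "s - 1" 1] \<mu> by simp
    ultimately show ?thesis
      using \<mu> by (simp add: gamma_kernel_def scaleR_conv_of_real algebra_simps)
  qed
  have "set_integrable lborel {0<..} (\<lambda>x. of_real \<mu> powr s * gamma_kernel s (of_real \<mu> * b) x)"
    using int by (rule set_integrable_mult_right)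
  then have "set_integrable lborel {0<..} (\<lambda>x. \<bar>\<mu>\<bar> *\<^sub>R gamma_kernel s b (\<mu> * x))"
    by (rule set_integrable_cong[THEN iffD1, rotated -1]) (use scaled in auto)
  then show int_b: "set_integrable lborel {0<..} (gamma_kernel s b)"
    using cov(1) by simp
  have "(LINT t:{0<..}|lborel. gamma_kernel s b t) =
          (LINT x:{0<..}|lborel. \<bar>\<mu>\<bar> *\<^sub>R gamma_kernel s b (\<mu> * x))"
    using cov(2) int_b by simp
  also have "\<dots> = (LINT x:{0<..}|lborel. of_real \<mu> powr s * gamma_kernel s (of_real \<mu> * b) x)"
    by (rule set_lebesgue_integral_cong) (use scaled in auto)
  finally show "(LINT t:{0<..}|lborel. gamma_kernel s b t) =
           of_real \<mu> powr s * (LINT t:{0<..}|lborel. gamma_kernel s (of_real \<mu> * b) t)"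
    by simp
qed

text \<open>For \<open>Re b > 0\<close> the real rescaling by \<open>\<mu> = Re b / |b|\<^sup>2\<close> moves \<open>b\<close> into the disc
  around \<open>1\<close>.\<close>

lemma gamma_kernel_integral:
  assumes s: "Re s > 0" and b: "Re b > 0"
  shows "set_integrable lborel {0<..} (gamma_kernel s b)"
    and "(LINT t:{0<..}|lborel. gamma_kernel s b t) = Gamma s * b powr (- s)"
proof -
  define \<mu> where "\<mu> = Re b / (norm b)\<^sup>2"
  have \<mu>: "\<mu> > 0" using b by (auto simp: \<mu>_def intro!: divide_pos_pos)
  define c where "c = of_real \<mu> * b"
  have c: "c = 1 + (c - 1)" "norm (c - 1) < 1"
    using norm_scaled_minus_one_less_one[OF b] by (simp_all add: c_def \<mu>_def)
  note disc = gamma_kernel_integral_disc[OF s c(2), folded c(1)]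
  note rescale = gamma_kernel_rescale[OF \<mu> disc(1)[unfolded c_def]]
  show "set_integrable lborel {0<..} (gamma_kernel s b)"
    by (rule rescale(1))
  have "c powr (- s) = of_real \<mu> powr (- s) * b powr (- s)"
    unfolding c_def using \<mu> by (intro powr_times_real_left) auto
  then show "(LINT t:{0<..}|lborel. gamma_kernel s b t) = Gamma s * b powr (- s)"
    using rescale(2) disc(2) \<mu> by (simp add: c_def powr_minus field_simps)
qed

definition log_gamma_kernel :: "complex \<Rightarrow> complex \<Rightarrow> real \<Rightarrow> complex" where
  "log_gamma_kernel s b u = of_real u powr (b - 1) * of_real (- ln u) powr (s - 1)"

lemma log_gamma_kernel_measurable [measurable]: "log_gamma_kernel s b \<in> borel_measurable borel"
  unfolding log_gamma_kernel_def by measurable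

lemma log_gamma_kernel_exp_minus:
  "\<bar>- exp (- t)\<bar> *\<^sub>R log_gamma_kernel s b (exp (- t)) = gamma_kernel s b t"
proof -
  have "complex_of_real (exp (- t)) powr (b - 1) = exp ((b - 1) * of_real (- t))"
    by (simp add: powr_def exp_of_real[symmetric] Ln_of_real)
  then have "\<bar>- exp (- t)\<bar> *\<^sub>R log_gamma_kernel s b (exp (- t)) =
               exp (of_real (- t)) * exp ((b - 1) * of_real (- t)) * of_real t powr (s - 1)"
    by (simp add: log_gamma_kernel_def scaleR_conv_of_real exp_of_real[symmetric])
  also have "exp (of_real (- t)) * exp ((b - 1) * of_real (- t)) = exp (- b * of_real t)"
    by (simp add: exp_add[symmetric] algebra_simps)
  finally show ?thesis by (simp add: gamma_kernel_def mult.commute)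
qed

lemma log_gamma_kernel_integral:
  assumes s: "Re s > 0" and b: "Re b > 0"
  shows "set_integrable lborel {0<..<1} (log_gamma_kernel s b)"
    and "(LINT u:{0<..<1}|lborel. log_gamma_kernel s b u) = Gamma s * b powr (- s)"
proof -
  have "(\<lambda>t. \<bar>- exp (- t)\<bar> *\<^sub>R log_gamma_kernel s b (exp (- t))) \<in> borel_measurable borel"
    by measurable
  note cov = set_integrable_lborel_change_variables[of "{0<..}" "\<lambda>t. exp (- t)",
      OF _ _ log_gamma_kernel_measurable this has_field_derivative_exp_minus inj_on_exp_minus,
      unfolded image_exp_minus_Ioi log_gamma_kernel_exp_minus, simplified]
  show int: "set_integrable lborel {0<..<1} (log_gamma_kernel s b)"
    using cov(1) gamma_kernel_integral(1)[OF s b] by simp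
  show "(LINT u:{0<..<1}|lborel. log_gamma_kernel s b u) = Gamma s * b powr (- s)"
    using cov(2)[OF int] gamma_kernel_integral(2)[OF s b] by simp
qed

section \<open>The substitution \<open>(x, y) \<mapsto> (x y, y)\<close>\<close>

definition triangle :: "(real \<times> real) set" where
  "triangle = {p. 0 < fst p \<and> fst p < snd p \<and> snd p < 1}"

lemma triangle_sets [measurable]: "triangle \<in> sets borel"
proof -
  have "triangle = {p. 0 < fst p} \<inter> {p. fst p < snd p} \<inter> {p::real \<times> real. snd p < 1}"
    by (auto simp: triangle_def)
  also have "open \<dots>"
    by (intro open_Int open_Collect_less continuous_intros)
  finally show ?thesis by simp
qed

lemma unit_square_sets [measurable]: "{0<..<1} \<times> {0<..<1} \<in> sets (borel :: (real \<times> real) measure)"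
  by (simp add: borel_prod[symmetric])

lemma fst_measurable [measurable]: "(fst :: real \<times> real \<Rightarrow> real) \<in> borel_measurable borel"
  and snd_measurable [measurable]: "(snd :: real \<times> real \<Rightarrow> real) \<in> borel_measurable borel"
  by (intro borel_measurable_continuous_onI continuous_intros)+

lemma triangle_density_measurable [measurable]:
  "(\<lambda>p::real \<times> real. indicator triangle p / snd p) \<in> borel_measurable borel"
  by (intro borel_measurable_divide borel_measurable_indicator triangle_sets)
    (intro borel_measurable_continuous_onI continuous_intros)

lemma shear_measurable [measurable]:
  "(\<lambda>p::real \<times> real. (fst p * snd p, snd p)) \<in> borel_measurable borel"
  by (intro borel_measurable_continuous_onI continuous_intros)

lemma nn_integral_shear_fiber:
  fixes f :: "real \<times> real \<Rightarrow> ennreal" and y :: real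
  assumes f[measurable]: "f \<in> borel_measurable borel"
  shows "(\<integral>\<^sup>+ x. indicator ({0<..<1} \<times> {0<..<1}) (x, y) * f (x * y, y) \<partial>lborel) =
           (\<integral>\<^sup>+ u. ennreal (indicator triangle (u, y) / y) * f (u, y) \<partial>lborel)"
proof (cases "0 < y \<and> y < 1")
  case False
  then have "\<And>x::real. indicator ({0<..<1} \<times> {0<..<1}) (x, y) = (0::ennreal)"
    "\<And>u. indicator triangle (u, y) = (0::real)"
    by (auto simp: triangle_def indicator_def)
  then show ?thesis by (simp only:) simp
next
  case True
  then have y: "0 < y" "y < 1" by auto
  define F where "F = (\<lambda>u. indicator {0<..<y} u * f (u, y))"
  have [measurable]: "F \<in> borel_measurable borel"
    unfolding F_def by measurable
  have "(\<integral>\<^sup>+ u. F u \<partial>lborel) = ennreal y * (\<integral>\<^sup>+ x. F (0 + y * x) \<partial>lborel)"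
    using nn_integral_real_affine[of F y 0] y by simp
  also have "(\<lambda>x. F (0 + y * x)) = (\<lambda>x. indicator ({0<..<1} \<times> {0<..<1}) (x, y) * f (x * y, y))"
  proof
    fix x
    have "(0 < y * x \<and> y * x < y) \<longleftrightarrow> (0 < x \<and> x < 1)"
      using y by (auto simp: zero_less_mult_iff)
    then show "F (0 + y * x) = indicator ({0<..<1} \<times> {0<..<1}) (x, y) * f (x * y, y)"
      using y by (auto simp: F_def indicator_def mult.commute)
  qed
  finally have F: "(\<integral>\<^sup>+ u. F u \<partial>lborel) =
      ennreal y * (\<integral>\<^sup>+ x. indicator ({0<..<1} \<times> {0<..<1}) (x, y) * f (x * y, y) \<partial>lborel)" .
  have "(\<integral>\<^sup>+ u. ennreal (indicator triangle (u, y) / y) * f (u, y) \<partial>lborel) =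
        (\<integral>\<^sup>+ u. ennreal (1 / y) * F u \<partial>lborel)"
    using y by (intro nn_integral_cong) (auto simp: triangle_def F_def indicator_def)
  also have "\<dots> = ennreal (1 / y) * (\<integral>\<^sup>+ u. F u \<partial>lborel)"
    by (rule nn_integral_cmult) simp
  also have "\<dots> = (\<integral>\<^sup>+ x. indicator ({0<..<1} \<times> {0<..<1}) (x, y) * f (x * y, y) \<partial>lborel)"
    using y unfolding F by (simp add: mult.assoc[symmetric] ennreal_mult[symmetric])
  finally show ?thesis ..
qed

lemma nn_integral_unit_square_shear:
  fixes f :: "real \<times> real \<Rightarrow> ennreal"
  assumes f[measurable]: "f \<in> borel_measurable borel"
  shows "(\<integral>\<^sup>+ p. indicator ({0<..<1} \<times> {0<..<1}) p * f (fst p * snd p, snd p) \<partial>lborel) =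
         (\<integral>\<^sup>+ p. ennreal (indicator triangle p / snd p) * f p \<partial>lborel)"
proof -
  have "(\<integral>\<^sup>+ p. indicator ({0<..<1} \<times> {0<..<1}) p * f (fst p * snd p, snd p) \<partial>lborel) =
        (\<integral>\<^sup>+ y. (\<integral>\<^sup>+ x. indicator ({0<..<1} \<times> {0<..<1}) (x, y) * f (x * y, y) \<partial>lborel) \<partial>lborel)"
    by (subst lborel_prod[symmetric], subst lborel_pair.nn_integral_snd[symmetric])
      (simp_all add: lborel_prod)
  also have "\<dots> = (\<integral>\<^sup>+ y. (\<integral>\<^sup>+ u. ennreal (indicator triangle (u, y) / y) * f (u, y) \<partial>lborel) \<partial>lborel)"
    by (simp add: nn_integral_shear_fiber)
  also have "\<dots> = (\<integral>\<^sup>+ p. ennreal (indicator triangle p / snd p) * f p \<partial>lborel)"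
    by (subst lborel_prod[symmetric], subst lborel_pair.nn_integral_snd[symmetric])
      (simp_all add: lborel_prod)
  finally show ?thesis .
qed

lemma distr_unit_square_shear:
  "distr (density lborel (\<lambda>p. ennreal (indicator ({0<..<1} \<times> {0<..<1}) p))) lborel (\<lambda>p. (fst p * snd p, snd p))
     = density lborel (\<lambda>p. ennreal (indicator triangle p / snd p))"
proof (rule measure_eqI)
  fix A assume "A \<in> sets (distr (density lborel (\<lambda>p. ennreal (indicator ({0<..<1} \<times> {0<..<1}) p))) lborel
                  (\<lambda>p::real \<times> real. (fst p * snd p, snd p)))"
  then have A[measurable]: "A \<in> sets borel" by simp
  have "emeasure (distr (density lborel (\<lambda>p. ennreal (indicator ({0<..<1} \<times> {0<..<1}) p))) lborel
          (\<lambda>p. (fst p * snd p, snd p))) A =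
        (\<integral>\<^sup>+ p. indicator ({0<..<1} \<times> {0<..<1}) p * indicator A (fst p * snd p, snd p) \<partial>lborel)"
    using measurable_sets[OF shear_measurable A]
    by (subst emeasure_distr) (auto simp: emeasure_density intro!: nn_integral_cong split: split_indicator)
  also have "\<dots> = (\<integral>\<^sup>+ p. ennreal (indicator triangle p / snd p) * indicator A p \<partial>lborel)"
    by (rule nn_integral_unit_square_shear) measurable
  also have "\<dots> = emeasure (density lborel (\<lambda>p. ennreal (indicator triangle p / snd p))) A"
    by (subst emeasure_density) auto
  finally show "emeasure (distr (density lborel (\<lambda>p. ennreal (indicator ({0<..<1} \<times> {0<..<1}) p))) lborel
      (\<lambda>p. (fst p * snd p, snd p))) A = emeasure (density lborel (\<lambda>p. ennreal (indicator triangle p / snd p))) A" .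
qed simp

lemma unit_square_shear:
  fixes g :: "real \<times> real \<Rightarrow> complex"
  assumes g[measurable]: "g \<in> borel_measurable borel"
  shows "set_integrable lborel ({0<..<1} \<times> {0<..<1}) (\<lambda>p. g (fst p * snd p, snd p)) \<longleftrightarrow>
           integrable lborel (\<lambda>p. (indicator triangle p / snd p) *\<^sub>R g p)"
    and "(LINT p:{0<..<1} \<times> {0<..<1}|lborel. g (fst p * snd p, snd p)) =
           integral\<^sup>L lborel (\<lambda>p. (indicator triangle p / snd p) *\<^sub>R g p)"
proof -
  let ?M = "density lborel (\<lambda>p. ennreal (indicator ({0<..<1} \<times> {0<..<1}) p))"
  let ?P = "\<lambda>p::real \<times> real. (fst p * snd p, snd p)"
  have P: "?P \<in> measurable ?M lborel" by simp
  have nonneg: "AE p in lborel. 0 \<le> indicator triangle p / snd p"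
    by (intro AE_I2) (auto simp: triangle_def indicator_def)
  have "set_integrable lborel ({0<..<1} \<times> {0<..<1}) (\<lambda>p. g (?P p)) \<longleftrightarrow> integrable ?M (\<lambda>p. g (?P p))"
    unfolding set_integrable_def by (subst integrable_density) auto
  also have "\<dots> \<longleftrightarrow> integrable (distr ?M lborel ?P) g"
    by (rule integrable_distr_eq[symmetric]) (auto simp: P)
  also have "\<dots> \<longleftrightarrow> integrable lborel (\<lambda>p. (indicator triangle p / snd p) *\<^sub>R g p)"
    unfolding distr_unit_square_shear by (rule integrable_density) (auto simp: nonneg)
  finally show "set_integrable lborel ({0<..<1} \<times> {0<..<1}) (\<lambda>p. g (?P p)) \<longleftrightarrow>
           integrable lborel (\<lambda>p. (indicator triangle p / snd p) *\<^sub>R g p)" .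
  have "(LINT p:{0<..<1} \<times> {0<..<1}|lborel. g (?P p)) = integral\<^sup>L ?M (\<lambda>p. g (?P p))"
    unfolding set_lebesgue_integral_def by (subst integral_density) auto
  also have "\<dots> = integral\<^sup>L (distr ?M lborel ?P) g"
    by (rule integral_distr[symmetric]) (auto simp: P)
  also have "\<dots> = integral\<^sup>L lborel (\<lambda>p. (indicator triangle p / snd p) *\<^sub>R g p)"
    unfolding distr_unit_square_shear by (rule integral_density) (auto simp: nonneg)
  finally show "(LINT p:{0<..<1} \<times> {0<..<1}|lborel. g (?P p)) =
           integral\<^sup>L lborel (\<lambda>p. (indicator triangle p / snd p) *\<^sub>R g p)" .
qed

section \<open>The Lerch integral\<close>

lemma norm_powr_le_exp_pi:
  fixes w s :: complex
  assumes "norm w \<ge> 1"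
  shows "norm (w powr s) \<le> exp (norm s * pi) * norm w powr norm s"
proof -
  have w0: "w \<noteq> 0" using assms by auto
  have e1: "norm (w powr s) = exp (Re (s * Ln w))" using w0 by (simp add: powr_def norm_exp_eq_Re)
  have r1: "Re (s * Ln w) \<le> norm s * norm (Ln w)"
    by (metis complex_Re_le_cmod norm_mult)
  have "norm (Ln w) \<le> \<bar>Re (Ln w)\<bar> + \<bar>Im (Ln w)\<bar>" by (rule cmod_le)
  also have "\<bar>Re (Ln w)\<bar> = ln (norm w)" using w0 assms by (simp add: Re_Ln)
  also have "\<bar>Im (Ln w)\<bar> \<le> pi" using w0 mpi_less_Im_Ln[of w] Im_Ln_le_pi[of w] by auto
  finally have r2: "norm (Ln w) \<le> ln (norm w) + pi" by simp
  have "Re (s * Ln w) \<le> norm s * (ln (norm w) + pi)"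
    using r1 mult_left_mono[OF r2, of "norm s"] by simp
  hence "norm (w powr s) \<le> exp (norm s * (ln (norm w) + pi))" using e1 by simp
  also have "\<dots> = exp (norm s * pi) * norm w powr norm s"
    using w0 by (simp add: powr_def distrib_left exp_add mult.commute)
  finally show ?thesis .
qed

lemma norm_lerch_term_lower_bound:
  fixes z s a :: complex
  assumes k: "real k \<ge> norm a + 1"
  shows "norm z ^ k / (exp (norm s * pi) * (real k + norm a) powr norm s) \<le>
           norm (z ^ k / (of_nat k + a) powr s)"
proof -
  have lower: "1 \<le> norm (of_nat k + a)"
    using k norm_triangle_ineq2[of "of_nat k" "- a"] by (auto simp: norm_minus_commute)
  have upper: "norm (of_nat k + a) \<le> real k + norm a"
    using norm_triangle_ineq[of "of_nat k" a] by simp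
  have "norm ((of_nat k + a) powr s) \<le> exp (norm s * pi) * norm (of_nat k + a) powr norm s"
    by (rule norm_powr_le_exp_pi[OF lower])
  also have "\<dots> \<le> exp (norm s * pi) * (real k + norm a) powr norm s"
    using lower upper by (intro mult_left_mono powr_mono2) auto
  finally have "norm ((of_nat k + a) powr s) \<le> exp (norm s * pi) * (real k + norm a) powr norm s" .
  moreover have "norm ((of_nat k + a) powr s) > 0"
    using lower by auto
  moreover have "real k + norm a > 0"
    using k norm_ge_zero[of a] by linarith
  ultimately show ?thesis
    unfolding norm_divide norm_power by (intro divide_left_mono) auto
qed

lemma norm_le_one_if_summable_lerch:
  fixes z s a :: complex
  assumes "summable (\<lambda>k. z ^ k / (of_nat k + a) powr s)"
  shows "norm z \<le> 1"
proof (rule ccontr)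
  assume "\<not> norm z \<le> 1"
  have "filterlim (\<lambda>k::nat. b ^ k / (C * (real k + A) powr p)) at_top at_top"
    if "b > 1" "C > 0" "A \<ge> 0" for b C A p :: real
    using that by real_asymp
  then have "filterlim (\<lambda>k::nat. norm z ^ k / (exp (norm s * pi) * (real k + norm a) powr norm s))
               at_top at_top"
    using \<open>\<not> norm z \<le> 1\<close> by simp
  then have "eventually (\<lambda>k. norm z ^ k / (exp (norm s * pi) * (real k + norm a) powr norm s) \<ge> 1) at_top"
    by (simp add: filterlim_at_top)
  moreover have "eventually (\<lambda>k. norm (z ^ k / (of_nat k + a) powr s) < 1) at_top"
    using order_tendstoD(2)[OF tendsto_norm_zero[OF summable_LIMSEQ_zero[OF assms]], of 1] by simp
  moreover have "eventually (\<lambda>k::nat. real k \<ge> norm a + 1) at_top"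
    by real_asymp
  ultimately have "eventually (\<lambda>k::nat. False) at_top"
  proof eventually_elim
    case (elim k)
    then show False
      using norm_lerch_term_lower_bound[of a k z s] by linarith
  qed
  then show False by simp
qed

lemma Re_pos_if_set_integrable_log_gamma_kernel:
  assumes s: "Re s > 0" and int: "set_integrable lborel {0<..<1} (log_gamma_kernel s a)"
  shows "Re a > 0"
proof (rule ccontr)
  assume "\<not> Re a > 0"
  define f where "f = (\<lambda>u::real. u powr (Re a - 1) * (- ln u) powr (Re s - 1))"
  have f_norm: "f u = norm (log_gamma_kernel s a u)" if "u \<in> {0<..<1}" for u
    using that by (simp add: f_def log_gamma_kernel_def norm_mult norm_powr_real_powr ln_less_zero)
  have "set_integrable lborel {0<..<1} f"
    using set_integrable_norm[OF int] by (rule set_integrable_cong[THEN iffD1, rotated -1]) (auto simp: f_norm)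
  moreover have "(\<lambda>t. exp (- t)) ` {0<..} = {0<..<1::real}"
    by (simp add: image_exp_minus_Ioi)
  moreover have "f \<in> borel_measurable borel" "(\<lambda>t. \<bar>- exp (- t)\<bar> *\<^sub>R f (exp (- t))) \<in> borel_measurable borel"
    unfolding f_def by measurable
  ultimately have "set_integrable lborel {0<..} (\<lambda>t. \<bar>- exp (- t)\<bar> *\<^sub>R f (exp (- t)))"
    using set_integrable_lborel_change_variables(1)[of "{0<..}" "\<lambda>t. exp (- t)" f,
        OF _ _ _ _ has_field_derivative_exp_minus inj_on_exp_minus] by simp
  then have "set_integrable lborel {1<..} (\<lambda>t. \<bar>- exp (- t)\<bar> *\<^sub>R f (exp (- t)))"
    by (rule set_integrable_subset) auto
  then have "set_integrable lborel {1<..} (\<lambda>t::real. 1 / t)"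
  proof (rule set_integrable_bound)
    show "set_borel_measurable lborel {1<..} (\<lambda>t::real. 1 / t)"
      unfolding set_borel_measurable_def by measurable
    show "AE t in lborel. t \<in> {1<..} \<longrightarrow> norm (1 / t) \<le> norm (\<bar>- exp (- t)\<bar> *\<^sub>R f (exp (- t)))"
    proof (intro AE_I2 impI)
      fix t :: real assume t: "t \<in> {1<..}"
      have "exp (- t) * exp (- t) powr (Re a - 1) = exp (- (Re a * t))"
        by (simp add: powr_def exp_add[symmetric] algebra_simps)
      then have e: "\<bar>- exp (- t)\<bar> *\<^sub>R f (exp (- t)) = exp (- (Re a * t)) * t powr (Re s - 1)"
        by (simp add: f_def mult.assoc[symmetric])
      have "1 \<le> exp (- (Re a * t))"
        using \<open>\<not> Re a > 0\<close> t by (simp add: mult_nonpos_nonneg)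
      moreover have "t powr (-1) \<le> t powr (Re s - 1)"
        using t s by (intro powr_mono) auto
      ultimately have "t powr (-1) \<le> exp (- (Re a * t)) * t powr (Re s - 1)"
        by (metis mult_le_cancel_right1 order_trans powr_ge_zero dual_order.order_iff_strict
            mult_less_cancel_right2 not_le)
      then show "norm (1 / t) \<le> norm (\<bar>- exp (- t)\<bar> *\<^sub>R f (exp (- t)))"
        unfolding e using t by (simp add: powr_minus divide_inverse)
    qed
  qed
  then show False using not_set_integrable_inverse_at_top by blast
qed

text \<open>The integrand of the theorem in the coordinates \<open>(u, y) = (x y, y)\<close>.\<close>

definition lerch_integrand :: "complex \<Rightarrow> complex \<Rightarrow> complex \<Rightarrow> real \<times> real \<Rightarrow> complex" where
  "lerch_integrand z s a p = - s * of_real (fst p) powr (a - 1) * of_real (- ln (snd p)) powr (s - 1)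
                              / ((1 - z * of_real (fst p)) * of_real (ln (fst p)))"

lemma lerch_integrand_measurable [measurable]: "lerch_integrand z s a \<in> borel_measurable borel"
  unfolding lerch_integrand_def by measurable

lemma norm_mult_of_real_less_one:
  fixes z :: complex
  assumes "norm z \<le> 1" "0 < u" "u < 1"
  shows "norm (z * of_real u) < 1"
proof -
  have "norm (z * of_real u) = norm z * u"
    using assms by (simp add: norm_mult)
  also have "\<dots> \<le> u"
    using assms mult_right_mono[of "norm z" 1 u] by simp
  finally show ?thesis using assms by simp
qed

lemma one_minus_mult_of_real_nonzero:
  fixes z :: complex
  assumes "norm z \<le> 1" "0 < u" "u < 1"
  shows "1 - z * of_real u \<noteq> 0"
  using norm_mult_of_real_less_one[OF assms] by auto

lemma set_integrable_if_set_integrable_over_one_minus: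
  fixes z :: complex
  assumes z: "norm z \<le> 1" and f[measurable]: "f \<in> borel_measurable borel"
    and int: "set_integrable lborel {0<..<1} (\<lambda>u. f u / (1 - z * of_real u))"
  shows "set_integrable lborel {0<..<1} f"
proof (rule set_integrable_bound[OF set_integrable_mult_right[OF set_integrable_norm[OF int], of 2]])
  show "AE u in lborel. u \<in> {0<..<1} \<longrightarrow> norm (f u) \<le> norm (2 * norm (f u / (1 - z * of_real u)))"
  proof (intro AE_I2 impI)
    fix u :: real assume "u \<in> {0<..<1}"
    then have "norm (1 - z * of_real u) \<le> 2" "1 - z * of_real u \<noteq> 0"
      using norm_triangle_ineq4[of 1 "z * of_real u"] norm_mult_of_real_less_one[OF z, of u]
        one_minus_mult_of_real_nonzero[OF z, of u] by auto
    then have "norm (f u) = norm (f u / (1 - z * of_real u)) * norm (1 - z * of_real u)"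
      by (simp add: norm_divide)
    also have "\<dots> \<le> norm (f u / (1 - z * of_real u)) * 2"
      using \<open>norm (1 - z * of_real u) \<le> 2\<close> by (intro mult_left_mono) auto
    finally show "norm (f u) \<le> norm (2 * norm (f u / (1 - z * of_real u)))"
      by simp
  qed
qed (simp add: set_borel_measurable_def)

lemma lerch_integrand_fiber:
  assumes "0 < u" "u < 1"
  shows "(indicator triangle (u, y) / y) *\<^sub>R lerch_integrand z s a (u, y) =
           indicator {u<..<1} y *\<^sub>R
             (- s * of_real u powr (a - 1) / ((1 - z * of_real u) * of_real (ln u)) *
              (of_real (- ln y) powr (s - 1) / of_real y))"
  using assms by (cases "u < y \<and> y < 1")
    (auto simp: triangle_def lerch_integrand_def indicator_def scaleR_conv_of_real field_simps)

lemma lerch_integrand_fiber_integral: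
  assumes s: "Re s > 0" and z: "norm z \<le> 1" and u: "0 < u" "u < 1"
  shows "(\<integral>y. (indicator triangle (u, y) / y) *\<^sub>R lerch_integrand z s a (u, y) \<partial>lborel) =
           log_gamma_kernel s a u / (1 - z * of_real u)"
proof -
  have L: "- ln u > 0" using u by (simp add: ln_less_zero)
  have "(\<integral>y. (indicator triangle (u, y) / y) *\<^sub>R lerch_integrand z s a (u, y) \<partial>lborel) =
          - s * of_real u powr (a - 1) / ((1 - z * of_real u) * of_real (ln u)) *
            (LINT y:{u<..<1}|lborel. of_real (- ln y) powr (s - 1) / of_real y)"
    unfolding lerch_integrand_fiber[OF u] mult_scaleR_right[symmetric] integral_mult_right_zero
      set_lebesgue_integral_def ..
  also have "\<dots> = - s * of_real u powr (a - 1) / ((1 - z * of_real u) * of_real (ln u)) *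
                    (of_real (- ln u) powr s / s)"
    unfolding log_powr_over_id_integral(2)[OF s u] ..
  also have "\<dots> = log_gamma_kernel s a u / (1 - z * of_real u)"
  proof -
    have "of_real (- ln u) powr s = of_real (- ln u) powr (s - 1) * (of_real (- ln u) :: complex)"
      using powr_add[of "of_real (- ln u) :: complex" "s - 1" 1] L by simp
    then show ?thesis
      using s L one_minus_mult_of_real_nonzero[OF z u]
      by (auto simp: log_gamma_kernel_def field_simps)
  qed
  finally show ?thesis .
qed

lemma Re_pos_if_integrable_lerch_fiber:
  fixes z s a :: complex
  assumes s: "s \<noteq> 0" and z: "norm z \<le> 1" and u: "0 < u" "u < 1"
    and fiber: "integrable lborel (\<lambda>y. (indicator triangle (u, y) / y) *\<^sub>R lerch_integrand z s a (u, y))"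
  shows "Re s > 0"
proof -
  have c: "- s * of_real u powr (a - 1) / ((1 - z * of_real u) * of_real (ln u)) \<noteq> 0"
    using s u one_minus_mult_of_real_nonzero[OF z u] by (simp add: ln_less_zero)
  have "set_integrable lborel {u<..<1} (\<lambda>y.
      - s * of_real u powr (a - 1) / ((1 - z * of_real u) * of_real (ln u)) *
      (of_real (- ln y) powr (s - 1) / of_real y))"
    using fiber unfolding lerch_integrand_fiber[OF u] set_integrable_def .
  then have "set_integrable lborel {u<..<1} (\<lambda>y. of_real (- ln y) powr (s - 1) / of_real y)"
    unfolding set_integrable_mult_right_iff[OF c] .
  then show ?thesis
    by (rule Re_pos_if_set_integrable_log_powr_over_id[OF u])
qed

lemma ex_in_Ioo_if_AE_lborel:
  assumes "AE x in lborel. P x" and "a < (b::real)"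
  shows "\<exists>x\<in>{a<..<b}. P x"
proof (rule ccontr)
  assume none: "\<not> (\<exists>x\<in>{a<..<b}. P x)"
  from assms(1) obtain N where N: "{x \<in> space lborel. \<not> P x} \<subseteq> N" "emeasure lborel N = 0" "N \<in> sets lborel"
    by (rule AE_E)
  have "{a<..<b} \<subseteq> N" using N(1) none by auto
  then have "emeasure lborel {a<..<b} \<le> emeasure lborel N" using N(3) by (intro emeasure_mono) auto
  then show False using N(2) assms(2) by simp
qed

text \<open>Fubini in the coordinates \<open>(u, y)\<close>, integrating over \<open>y\<close> first.  Integrability of a
  single fibre already forces \<open>Re s > 0\<close>.\<close>

lemma lerch_double_integral_reduction:
  fixes z s a :: complex
  assumes s: "s \<noteq> 0" and z: "norm z \<le> 1"
    and int: "set_integrable lborel ({0<..<1} \<times> {0<..<1}) (\<lambda>p. lerch_integrand z s a (fst p * snd p, snd p))"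
  shows "Re s > 0"
    and "set_integrable lborel {0<..<1} (\<lambda>u. log_gamma_kernel s a u / (1 - z * of_real u))"
    and "(LINT p:{0<..<1} \<times> {0<..<1}|lborel. lerch_integrand z s a (fst p * snd p, snd p)) =
           (LINT u:{0<..<1}|lborel. log_gamma_kernel s a u / (1 - z * of_real u))"
proof -
  define H where "H = (\<lambda>p. (indicator triangle p / snd p) *\<^sub>R lerch_integrand z s a p)"
  have "integrable lborel H"
    using unit_square_shear(1)[OF lerch_integrand_measurable] int by (simp add: H_def)
  then have H: "integrable (lborel \<Otimes>\<^sub>M lborel) H"
    by (simp add: lborel_prod)
  obtain u where u: "0 < u" "u < 1" and fiber: "integrable lborel (\<lambda>y. H (u, y))"
    using ex_in_Ioo_if_AE_lborel[OF lborel_pair.AE_integrable_fst'[OF H], of 0 1] by auto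
  show pos: "Re s > 0"
    using fiber unfolding H_def snd_conv by (rule Re_pos_if_integrable_lerch_fiber[OF s z u])
  have inner: "(\<lambda>u. \<integral>y. H (u, y) \<partial>lborel) =
                 (\<lambda>u. indicator {0<..<1} u *\<^sub>R (log_gamma_kernel s a u / (1 - z * of_real u)))"
  proof
    fix u :: real
    show "(\<integral>y. H (u, y) \<partial>lborel) = indicator {0<..<1} u *\<^sub>R (log_gamma_kernel s a u / (1 - z * of_real u))"
    proof (cases "0 < u \<and> u < 1")
      case True
      then show ?thesis
        using lerch_integrand_fiber_integral[OF pos z] by (simp add: H_def)
    next
      case False
      then have "H (u, y) = 0" for y
        by (auto simp: H_def triangle_def)
      with False show ?thesis by simp
    qed
  qed
  show "set_integrable lborel {0<..<1} (\<lambda>u. log_gamma_kernel s a u / (1 - z * of_real u))"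
    using lborel_pair.integrable_fst'[OF H] unfolding inner set_integrable_def .
  have "(LINT p:{0<..<1} \<times> {0<..<1}|lborel. lerch_integrand z s a (fst p * snd p, snd p)) =
          integral\<^sup>L (lborel \<Otimes>\<^sub>M lborel) H"
    using unit_square_shear(2)[OF lerch_integrand_measurable] by (simp add: H_def lborel_prod)
  also have "\<dots> = (\<integral>u. (\<integral>y. H (u, y) \<partial>lborel) \<partial>lborel)"
    by (rule lborel_pair.integral_fst'[OF H, symmetric])
  also have "\<dots> = (LINT u:{0<..<1}|lborel. log_gamma_kernel s a u / (1 - z * of_real u))"
    unfolding inner set_lebesgue_integral_def ..
  finally show "(LINT p:{0<..<1} \<times> {0<..<1}|lborel. lerch_integrand z s a (fst p * snd p, snd p)) =
           (LINT u:{0<..<1}|lborel. log_gamma_kernel s a u / (1 - z * of_real u))" .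
qed

lemma norm_geometric_partial_sum_le:
  fixes w :: "'a::real_normed_field"
  assumes "norm w < 1"
  shows "norm (\<Sum>k<N. w ^ k) \<le> 2 / norm (1 - w)"
proof -
  have w: "w \<noteq> 1" using assms by auto
  have "norm (w ^ N) \<le> 1"
    using assms by (simp add: norm_power power_le_one)
  then have "norm (1 - w ^ N) \<le> 2"
    using norm_triangle_ineq4[of 1 "w ^ N"] by simp
  then have "norm (1 - w ^ N) / norm (1 - w) \<le> 2 / norm (1 - w)"
    by (rule divide_right_mono) simp
  then show ?thesis
    using w by (simp add: sum_gp_strict norm_divide)
qed

lemma log_gamma_kernel_shift:
  assumes "u > 0"
  shows "z ^ k * log_gamma_kernel s (a + of_nat k) u = log_gamma_kernel s a u * (z * of_real u) ^ k"
proof -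
  have "of_real u powr (a + of_nat k - 1) = of_real u powr (a - 1) * (of_real u powr of_nat k :: complex)"
    by (simp add: powr_add[symmetric] algebra_simps)
  also have "(of_real u powr of_nat k :: complex) = of_real u ^ k"
    using assms by (simp add: powr_nat')
  finally show ?thesis
    by (simp add: log_gamma_kernel_def power_mult_distrib algebra_simps)
qed

lemma integral_lerch_partial_sum:
  assumes s: "Re s > 0" and a: "Re a > 0"
  shows "(LINT u:{0<..<1}|lborel. \<Sum>k<N. z ^ k * log_gamma_kernel s (a + of_nat k) u) =
           (\<Sum>k<N. Gamma s * (z ^ k / (of_nat k + a) powr s))"
proof -
  let ?g = "\<lambda>k u. indicator {0<..<1} u *\<^sub>R log_gamma_kernel s (a + of_nat k) u"
  have int_k: "integrable lborel (\<lambda>u. z ^ k * ?g k u)" for k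
    using log_gamma_kernel_integral(1)[OF s, of "a + of_nat k"] a
    by (intro integrable_mult_right) (simp add: set_integrable_def)
  have "(LINT u:{0<..<1}|lborel. \<Sum>k<N. z ^ k * log_gamma_kernel s (a + of_nat k) u) =
          integral\<^sup>L lborel (\<lambda>u. \<Sum>k<N. z ^ k * ?g k u)"
    by (simp add: set_lebesgue_integral_def scaleR_sum_right)
  also have "\<dots> = (\<Sum>k<N. integral\<^sup>L lborel (\<lambda>u. z ^ k * ?g k u))"
    by (rule Bochner_Integration.integral_sum[where f="\<lambda>k u. z ^ k * ?g k u"]) (rule int_k)
  also have "\<dots> = (\<Sum>k<N. z ^ k * integral\<^sup>L lborel (?g k))"
    by (intro sum.cong refl integral_mult_right_zero)
  also have "\<dots> = (\<Sum>k<N. Gamma s * (z ^ k / (of_nat k + a) powr s))"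
    using log_gamma_kernel_integral(2)[OF s, of "a + of_nat _"] a
    by (intro sum.cong refl) (simp add: set_lebesgue_integral_def powr_minus divide_inverse add.commute)
  finally show ?thesis .
qed

text \<open>Expand \<open>1 / (1 - z u)\<close> geometrically and integrate termwise; the partial sums are
  dominated by twice the modulus of the integrand.\<close>

lemma lerch_Gamma_eq_integral:
  fixes z s a :: complex
  assumes s: "Re s > 0" and a: "Re a > 0" and z: "norm z \<le> 1"
    and sm: "summable (\<lambda>k. z ^ k / (of_nat k + a) powr s)"
    and int: "set_integrable lborel {0<..<1} (\<lambda>u. log_gamma_kernel s a u / (1 - z * of_real u))"
  shows "(LINT u:{0<..<1}|lborel. log_gamma_kernel s a u / (1 - z * of_real u)) =
           Gamma s * (\<Sum>k. z ^ k / (of_nat k + a) powr s)"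
proof -
  define Q where "Q = (\<lambda>u. log_gamma_kernel s a u / (1 - z * of_real u))"
  define S where "S = (\<lambda>N u. indicator {0<..<1} u *\<^sub>R (\<Sum>k<N. z ^ k * log_gamma_kernel s (a + of_nat k) u))"
  define f where "f = (\<lambda>u. indicator {0<..<1} u *\<^sub>R Q u)"
  define W where "W = (\<lambda>u. indicator {0<..<1} u *\<^sub>R (2 * norm (Q u)))"
  have zu: "norm (z * of_real u) < 1" "1 - z * of_real u \<noteq> 0" if "0 < u" "u < 1" for u
    using norm_mult_of_real_less_one[OF z that] one_minus_mult_of_real_nonzero[OF z that] by auto
  have S_eq: "S N u = indicator {0<..<1} u *\<^sub>R (log_gamma_kernel s a u * (\<Sum>k<N. (z * of_real u) ^ k))" for N u
    by (cases "0 < u") (simp_all add: S_def log_gamma_kernel_shift sum_distrib_left indicator_def)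
  have W: "integrable lborel W"
    using set_integrable_mult_right[OF set_integrable_norm[OF int], of 2]
    by (simp add: W_def Q_def set_integrable_def)
  have lim: "AE u in lborel. (\<lambda>N. S N u) \<longlonglongrightarrow> f u"
  proof (rule AE_I2)
    fix u :: real
    show "(\<lambda>N. S N u) \<longlonglongrightarrow> f u"
    proof (cases "0 < u \<and> u < 1")
      case True
      then have "(\<lambda>N. \<Sum>k<N. (z * of_real u) ^ k) \<longlonglongrightarrow> 1 / (1 - z * of_real u)"
        using geometric_sums[OF zu(1)] by (simp add: sums_def)
      then have "(\<lambda>N. log_gamma_kernel s a u * (\<Sum>k<N. (z * of_real u) ^ k)) \<longlonglongrightarrow> Q u"
        unfolding Q_def by (auto dest: tendsto_mult_left)
      with True show ?thesis by (simp add: S_eq f_def)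
    qed (simp add: S_eq f_def)
  qed
  have bound: "AE u in lborel. norm (S N u) \<le> W u" for N
  proof (rule AE_I2)
    fix u :: real
    show "norm (S N u) \<le> W u"
    proof (cases "0 < u \<and> u < 1")
      case True
      then have "norm (log_gamma_kernel s a u) * norm (\<Sum>k<N. (z * of_real u) ^ k) \<le>
                   norm (log_gamma_kernel s a u) * (2 / norm (1 - z * of_real u))"
        using norm_geometric_partial_sum_le[OF zu(1)] by (intro mult_left_mono) auto
      also have "\<dots> = W u"
        using True by (simp add: W_def Q_def norm_divide)
      finally show ?thesis
        using True by (simp add: S_eq norm_mult)
    qed (simp add: S_eq W_def)
  qed
  have conv: "(\<lambda>N. integral\<^sup>L lborel (S N)) \<longlonglongrightarrow> integral\<^sup>L lborel f"
    by (rule integral_dominated_convergence[OF _ _ W lim bound]) (unfold S_def f_def Q_def, measurable)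
  have partial: "integral\<^sup>L lborel (S N) = (\<Sum>k<N. Gamma s * (z ^ k / (of_nat k + a) powr s))" for N
    using integral_lerch_partial_sum[OF s a] by (simp add: S_def set_lebesgue_integral_def)
  have "(\<lambda>N. \<Sum>k<N. Gamma s * (z ^ k / (of_nat k + a) powr s)) \<longlonglongrightarrow>
                   Gamma s * (\<Sum>k. z ^ k / (of_nat k + a) powr s)"
    using sums_mult[OF summable_sums[OF sm], of "Gamma s"] by (simp add: sums_def)
  with conv have "integral\<^sup>L lborel f = Gamma s * (\<Sum>k. z ^ k / (of_nat k + a) powr s)"
    unfolding partial by (rule LIMSEQ_unique)
  then show ?thesis
    by (simp add: f_def Q_def set_lebesgue_integral_def)
qed

lemma lerch_phi_Gamma_double_integral:
  fixes z s a :: complex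
  assumes s: "s \<noteq> 0"
    and sm: "summable (\<lambda>k. z ^ k / (of_nat k + a) powr s)"
    and int: "set_integrable lborel ({0<..<1} \<times> {0<..<1})
            (\<lambda>(x::real, y::real). - s * (of_real (x * y)) powr (a - 1) * (of_real (- ln y)) powr (s - 1)
                 / ((1 - z * of_real x * of_real y) * of_real (ln (x * y))))"
  shows "lerch_phi z s a * Gamma s =
           (LINT p : {0<..<1} \<times> {0<..<1} | lborel.
             (\<lambda>(x::real, y::real). - s * (of_real (x * y)) powr (a - 1) * (of_real (- ln y)) powr (s - 1)
               / ((1 - z * of_real x * of_real y) * of_real (ln (x * y)))) p)"
proof -
  have integrand: "(\<lambda>(x::real, y::real). - s * (of_real (x * y)) powr (a - 1) * (of_real (- ln y)) powr (s - 1)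
                     / ((1 - z * of_real x * of_real y) * of_real (ln (x * y))))
                   = (\<lambda>p. lerch_integrand z s a (fst p * snd p, snd p))"
    by (auto simp: fun_eq_iff lerch_integrand_def mult.assoc)
  have z: "norm z \<le> 1"
    by (rule norm_le_one_if_summable_lerch[OF sm])
  note reduction = lerch_double_integral_reduction[OF s z int[unfolded integrand]]
  have "Re a > 0"
    using set_integrable_if_set_integrable_over_one_minus[OF z _ reduction(2)]
    by (intro Re_pos_if_set_integrable_log_gamma_kernel[OF reduction(1)]) simp
  then have "lerch_phi z s a * Gamma s =
               (LINT p:{0<..<1} \<times> {0<..<1}|lborel. lerch_integrand z s a (fst p * snd p, snd p))"
    using lerch_Gamma_eq_integral[OF reduction(1) _ z sm reduction(2)] reduction(3)
    by (simp add: lerch_phi_def mult.commute)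
  then show ?thesis
    unfolding integrand .
qed

lemma riemann_zeta_Gamma_double_integral:
  fixes s :: complex
  assumes s: "s \<noteq> 0"
    and sm: "summable (\<lambda>k. 1 / (of_nat (Suc k)) powr s)"
    and int: "set_integrable lborel ({0<..<1} \<times> {0<..<1})
            (\<lambda>(x::real, y::real). - s * (of_real (- ln y)) powr (s - 1)
                 / ((1 - of_real (x * y)) * of_real (ln (x * y))))"
  shows "riemann_zeta s * Gamma s =
           (LINT p : {0<..<1} \<times> {0<..<1} | lborel.
             (\<lambda>(x::real, y::real). - s * (of_real (- ln y)) powr (s - 1)
               / ((1 - of_real (x * y)) * of_real (ln (x * y)))) p)"
proof -
  have integrand: "\<forall>p. p \<in> {0<..<1} \<times> {0<..<1} \<longrightarrow>
                   (\<lambda>(x::real, y::real). - s * (of_real (x * y)) powr (1 - 1) * (of_real (- ln y)) powr (s - 1)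
                     / ((1 - 1 * of_real x * of_real y) * of_real (ln (x * y)))) p
                 = (\<lambda>(x::real, y::real). - s * (of_real (- ln y)) powr (s - 1)
                     / ((1 - of_real (x * y)) * of_real (ln (x * y)))) p"
    by (auto simp: mult.assoc)
  have series: "(\<lambda>k. 1 ^ k / (of_nat k + 1) powr s) = (\<lambda>k. 1 / (of_nat (Suc k) :: complex) powr s)"
    by (simp add: add.commute)
  have "set_integrable lborel ({0<..<1} \<times> {0<..<1})
            (\<lambda>(x::real, y::real). - s * (of_real (x * y)) powr (1 - 1) * (of_real (- ln y)) powr (s - 1)
                 / ((1 - 1 * of_real x * of_real y) * of_real (ln (x * y))))"
    using int by (rule set_integrable_cong[THEN iffD2, rotated -1]) (use integrand in blast)+
  moreover have "summable (\<lambda>k. (1::complex) ^ k / (of_nat k + 1) powr s)"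
    using sm unfolding series .
  moreover have "riemann_zeta s = lerch_phi 1 s 1"
    unfolding riemann_zeta_def lerch_phi_def series ..
  ultimately show ?thesis
    using lerch_phi_Gamma_double_integral[OF s, of 1 1] set_lebesgue_integral_cong[OF _ integrand, of lborel]
    by simp

qed

theorem theorem3p3:
  fixes z s a :: complex
  assumes Gamma_defined: "s \<notin> \<int>\<^sub>\<le>\<^sub>0"
  shows "(summable (\<lambda>k. z ^ k / (of_nat k + a) powr s) \<and>
          set_integrable lborel ({0<..<1} \<times> {0<..<1})
            (\<lambda>(x::real, y::real). - s * (of_real (x * y)) powr (a - 1) * (of_real (- ln y)) powr (s - 1)
                 / ((1 - z * of_real x * of_real y) * of_real (ln (x * y))))
         \<longrightarrow> lerch_phi z s a * Gamma s =
             (LINT p : {0<..<1} \<times> {0<..<1} | lborel.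
               (\<lambda>(x::real, y::real). - s * (of_real (x * y)) powr (a - 1) * (of_real (- ln y)) powr (s - 1)
                 / ((1 - z * of_real x * of_real y) * of_real (ln (x * y)))) p))
       \<and> (summable (\<lambda>k. 1 / (of_nat (Suc k)) powr s) \<and>
          set_integrable lborel ({0<..<1} \<times> {0<..<1})
            (\<lambda>(x::real, y::real). - s * (of_real (- ln y)) powr (s - 1)
                 / ((1 - of_real (x * y)) * of_real (ln (x * y))))
         \<longrightarrow> riemann_zeta s * Gamma s =
             (LINT p : {0<..<1} \<times> {0<..<1} | lborel.
               (\<lambda>(x::real, y::real). - s * (of_real (- ln y)) powr (s - 1)
                 / ((1 - of_real (x * y)) * of_real (ln (x * y)))) p))"
proof -
  have "s \<noteq> 0"
    using Gamma_defined by auto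
  then show ?thesis
    using lerch_phi_Gamma_double_integral riemann_zeta_Gamma_double_integral by blast
qed

end
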